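(* Consider the problem $\min_{x\in\mathbb R^n} f(x)$ subject to $Ax=b$, where $f:\mathbb R^n\to\mathbb R$ is convex and continuously differentiable, $A\in\mathbb R^{m\times n}$, $b\in\mathbb R^m$, and assume the KKT set $\Omega$ is nonempty. Let $\{(x_k,\lambda_k)\}_{k\ge0}$ be generated by the accelerated augmented Lagrangian method described in the context (in either Case I or Case II). Then every cluster point of $\{(x_k,\lambda_k)\}_{k\ge0}$ belongs to $\Omega$.
   Context: The KKT set is $\Omega=\{(x^*,\lambda^* )\in\mathbb R^n\times\mathbb R^m: Ax^*=b,\ \nabla f(x^* )+A^\top\lambda^*=0\}$. Parameter sequence: $\{t_k\}_{k\ge1}$ is nondecreasing, $t_1=1$, $t_k>1$ for all $k>2$, $t_k\to+\infty$, and $t_{k+1}^2-t_k^2\le\rho t_{k+1}$ for all $k\ge 1$, with fixed $\rho\in(0,1]$. Fix $\eta\in[\rho,1]$, $\gamma>0$, $\delta>0$, $\beta\ge0$. Algorithm: initial points $x_0=x_1\in\mathbb R^n$, $\lambda_0=\lambda_1\in\mathbb R^m$. For $k=1,2,\dots$: set $\alpha_k=(t_{k+1}-\eta)/\eta$, $c_k=t_{k+1}/\eta$, $\bar x_k=x_k+\frac{t_k-1}{t_{k+1}}(x_k-x_{k-1})$, $\bar\lambda_k=\lambda_k+\frac{t_k-1}{t_{k+1}}(\lambda_k-\lambda_{k-1})$, $p_k=c_k\bar\lambda_k-\alpha_k\lambda_k$, $r_k=\alpha_kAx_k+b$. Case I ($f$ convex and $C^1$): $x_{k+1}=\arg\min_{x}\{f(x)+\frac\beta2\|Ax-b\|^2+\frac1{2\gamma}\|x-\bar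 x_k\|^2+\langle p_k,Ax-b\rangle+\frac\delta2\|c_kAx-r_k\|^2\}$. Case II ($f$ convex with $L$-Lipschitz gradient, and $\gamma\le 1/L$): $x_{k+1}=\arg\min_{x}\{\langle\nabla f(\bar x_k),x\rangle+\frac\beta2\|Ax-b\|^2+\frac1{2\gamma}\|x-\bar x_k\|^2+\langle p_k,Ax-b\rangle+\frac\delta2\|c_kAx-r_k\|^2\}$. Then $\lambda_{k+1}=\bar\lambda_k+\delta(c_kAx_{k+1}-r_k)$. *)

theory Defs
  imports "HOL-Analysis.Analysis"
begin

definition KKT_set :: "real^'n^'m \<Rightarrow> real^'m \<Rightarrow> (real^'n \<Rightarrow> real^'n) \<Rightarrow> ((real^'n) \<times> (real^'m)) set" where
  "KKT_set A b df = {(xs, ls). A *v xs = b \<and> df xs + transpose A *v ls = 0}"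

definition aalm_alpha :: "(nat \<Rightarrow> real) \<Rightarrow> real \<Rightarrow> nat \<Rightarrow> real" where
  "aalm_alpha t \<eta> k = (t (Suc k) - \<eta>) / \<eta>"

definition aalm_c :: "(nat \<Rightarrow> real) \<Rightarrow> real \<Rightarrow> nat \<Rightarrow> real" where
  "aalm_c t \<eta> k = t (Suc k) / \<eta>"

definition aalm_bar :: "(nat \<Rightarrow> real) \<Rightarrow> (nat \<Rightarrow> 'a::real_vector) \<Rightarrow> nat \<Rightarrow> 'a" where
  "aalm_bar t u k = u k + ((t k - 1) / t (Suc k)) *\<^sub>R (u k - u (k - 1))"

text \<open>Subproblem objective; h is f (Case I) or the linearization of f at xbar (Case II).\<close>
definition aalm_obj :: "(real^'n \<Rightarrow> real) \<Rightarrow> real^'n^'m \<Rightarrow> real^'m \<Rightarrow> real \<Rightarrow> real \<Rightarrow> real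
    \<Rightarrow> real^'n \<Rightarrow> real^'m \<Rightarrow> real \<Rightarrow> real^'m \<Rightarrow> real^'n \<Rightarrow> real" where
  "aalm_obj h A b \<beta> \<gamma> \<delta> xb p c r y =
     h y + \<beta> / 2 * (norm (A *v y - b))\<^sup>2 + 1 / (2 * \<gamma>) * (norm (y - xb))\<^sup>2
       + inner p (A *v y - b) + \<delta> / 2 * (norm (c *\<^sub>R (A *v y) - r))\<^sup>2"

end

theory Submission
  imports Defs
begin

(* Write c_k = t_(k+1) / eta and, for a sequence u, hat u k = u_k + c_k (u_(k+1) - u_k), so that
   u_(k+1) = (1 - 1/c_k) u_k + (1/c_k) hat u k.  For a KKT point (xh, lh) the energy
     c_k^2 (L(x_(k+1), lh) - L(xh, lh))
       + (|hat x k - xh|^2 + eps |x_k - xh|^2) / (2 gamma) + (|hat lam k - lh|^2 + eps |lam_k - lh|^2) / (2 delta),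
   with L the augmented Lagrangian and eps = (1 - eta) / eta, is nonincreasing; this is where
   t_(k+1)^2 - t_k^2 <= rho t_(k+1) and gamma L <= 1 enter.  Hence all sequences are bounded, the
   Lagrangian gap and the feasibility residual are O(1/c_k^2), and f(x_k) -> f(xh).  On the dual side,
   L(z, hat lam k) - f(xh) is asymptotically nonnegative for every z, and this survives the averaging
   that produces lam_(k+1).  A cluster point (xs, ls) is therefore feasible and minimizes L(., ls) at
   the value f(xs) = f(xh), which gives the KKT conditions. *)

section \<open>Convex and smooth functions\<close>

lemma has_field_derivative_along_line:
  fixes f :: "'a::real_inner \<Rightarrow> real"
  assumes "(f has_derivative (\<lambda>h. inner g h)) (at (y + s *\<^sub>R d))"
  shows "((\<lambda>s. f (y + s *\<^sub>R d)) has_field_derivative inner g d) (at s)"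
proof -
  have "((\<lambda>s. y + s *\<^sub>R d) has_derivative (\<lambda>s. s *\<^sub>R d)) (at s)"
    by (intro derivative_eq_intros) auto
  from has_derivative_compose[OF this assms]
  have "((\<lambda>s. f (y + s *\<^sub>R d)) has_derivative (\<lambda>s. s * inner g d)) (at s)"
    by simp
  then show ?thesis
    by (simp add: has_field_derivative_def mult_commute_abs)
qed

lemma convex_on_gradient_ineq:
  fixes f :: "'a::real_inner \<Rightarrow> real"
  assumes f: "convex_on UNIV f" and df: "(f has_derivative (\<lambda>h. inner g h)) (at y)"
  shows "f y + inner g (x - y) \<le> f x"
proof -
  define \<phi> where "\<phi> s = f (y + s *\<^sub>R (x - y))" for s
  have "convex_on UNIV \<phi>"
  proof (rule convex_onI)
    fix s a b :: real
    assume "0 < s" "s < 1"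
    moreover have "y + ((1 - s) * a + s * b) *\<^sub>R (x - y)
        = (1 - s) *\<^sub>R (y + a *\<^sub>R (x - y)) + s *\<^sub>R (y + b *\<^sub>R (x - y))"
      by (simp add: algebra_simps)
    ultimately show "\<phi> ((1 - s) *\<^sub>R a + s *\<^sub>R b) \<le> (1 - s) * \<phi> a + s * \<phi> b"
      unfolding \<phi>_def using convex_onD[OF f, of s] by simp
  qed simp
  moreover have "(\<phi> has_field_derivative inner g (x - y)) (at 0)"
    unfolding \<phi>_def by (rule has_field_derivative_along_line) (simp add: df)
  ultimately have "inner g (x - y) * (1 - 0) \<le> \<phi> 1 - \<phi> 0"
    by (intro convex_on_imp_above_tangent) auto
  then show ?thesis
    unfolding \<phi>_def by simp
qed

lemma descent_lemma:
  fixes f :: "'a::real_inner \<Rightarrow> real"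
  assumes df: "\<And>z. (f has_derivative (\<lambda>h. inner (df z) h)) (at z)"
    and lipschitz: "\<And>u v. norm (df u - df v) \<le> L * norm (u - v)"
  shows "f x \<le> f y + inner (df y) (x - y) + L / 2 * (norm (x - y))\<^sup>2"
proof -
  define d where "d = x - y"
  define \<psi> where "\<psi> s = f (y + s *\<^sub>R d) - s * inner (df y) d - L / 2 * s\<^sup>2 * (norm d)\<^sup>2" for s
  have "\<psi> 1 \<le> \<psi> 0"
  proof (rule DERIV_nonpos_imp_nonincreasing[of 0 1 \<psi>])
    fix s :: real
    assume "0 \<le> s" "s \<le> 1"
    have D: "(\<psi> has_field_derivative
        inner (df (y + s *\<^sub>R d) - df y) d - L * s * (norm d)\<^sup>2) (at s)"
      unfolding \<psi>_def
      by (rule derivative_eq_intros has_field_derivative_along_line df refl)+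
        (simp add: inner_diff_left)
    moreover have "inner (df (y + s *\<^sub>R d) - df y) d \<le> norm (df (y + s *\<^sub>R d) - df y) * norm d"
      by (rule norm_cauchy_schwarz)
    moreover have "norm (df (y + s *\<^sub>R d) - df y) \<le> L * norm (s *\<^sub>R d)"
      using lipschitz[of "y + s *\<^sub>R d" y] by simp
    then have "norm (df (y + s *\<^sub>R d) - df y) * norm d \<le> L * norm (s *\<^sub>R d) * norm d"
      by (rule mult_right_mono) simp
    moreover have "L * norm (s *\<^sub>R d) * norm d = L * s * (norm d)\<^sup>2"
      using \<open>0 \<le> s\<close> by (simp add: power2_eq_square)
    ultimately have "inner (df (y + s *\<^sub>R d) - df y) d - L * s * (norm d)\<^sup>2 \<le> 0"
      by linarith
    with D show "\<exists>y. (\<psi> has_field_derivative y) (at s) \<and> y \<le> 0"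
      by blast
  qed simp
  then show ?thesis
    unfolding \<psi>_def d_def by simp
qed

section \<open>Bounded and averaged sequences\<close>

lemma Bseq_convex_recursion:
  fixes u w :: "nat \<Rightarrow> 'a::real_normed_vector"
  assumes \<theta>: "\<And>k. 0 \<le> \<theta> k" "\<And>k. \<theta> k \<le> 1"
    and u_Suc: "\<And>k. u (Suc k) = (1 - \<theta> k) *\<^sub>R u k + \<theta> k *\<^sub>R w k"
    and "Bseq w"
  shows "Bseq u"
proof -
  obtain K where K: "\<And>k. norm (w k) \<le> K"
    using \<open>Bseq w\<close> unfolding Bseq_def by blast
  have "norm (u k) \<le> max (norm (u 0)) K" for k
  proof (induction k)
    case (Suc k)
    have "norm (u (Suc k)) \<le> (1 - \<theta> k) * norm (u k) + \<theta> k * norm (w k)"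
      unfolding u_Suc using \<theta>[of k] norm_triangle_ineq[of "(1 - \<theta> k) *\<^sub>R u k" "\<theta> k *\<^sub>R w k"]
      by simp
    also have "\<dots> \<le> (1 - \<theta> k) * max (norm (u 0)) K + \<theta> k * max (norm (u 0)) K"
      using \<theta>[of k] Suc K[of k] by (intro add_mono mult_left_mono) auto
    finally show ?case
      by (simp add: algebra_simps)
  qed simp
  then show ?thesis
    by (rule BseqI')
qed

lemma Bseq_plus:
  fixes u v :: "nat \<Rightarrow> 'a::real_normed_vector"
  shows "Bseq u \<Longrightarrow> Bseq v \<Longrightarrow> Bseq (\<lambda>k. u k + v k)"
  by (metis Elementary_Normed_Spaces.Bseq_eq_bounded bounded_plus_comp)

lemma Bseq_minus:
  fixes u v :: "nat \<Rightarrow> 'a::real_normed_vector"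
  shows "Bseq u \<Longrightarrow> Bseq v \<Longrightarrow> Bseq (\<lambda>k. u k - v k)"
  by (metis Elementary_Normed_Spaces.Bseq_eq_bounded bounded_minus_comp)

lemma Bseq_scaleR:
  fixes u :: "nat \<Rightarrow> 'a::real_normed_vector"
  shows "Bseq u \<Longrightarrow> Bseq (\<lambda>k. a *\<^sub>R u k)"
  by (metis Elementary_Normed_Spaces.Bseq_eq_bounded bounded_scaleR_comp)

lemma Bseq_if_dist_sq_le:
  fixes u :: "nat \<Rightarrow> 'a::real_normed_vector"
  assumes "\<And>k. (norm (u k - v))\<^sup>2 \<le> C"
  shows "Bseq u"
proof (rule BseqI')
  fix k
  have "norm (u k - v) \<le> sqrt C"
    using assms[of k] by (simp add: real_le_rsqrt)
  then show "norm (u k) \<le> norm v + sqrt C"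
    using norm_triangle_sub[of "u k" v] by linarith
qed

lemma inner_tendsto_0_if_Bseq:
  fixes u v :: "nat \<Rightarrow> 'a::real_inner"
  assumes "Bseq u" and "v \<longlonglongrightarrow> 0"
  shows "(\<lambda>k. inner (u k) (v k)) \<longlonglongrightarrow> 0"
proof -
  obtain K where K: "\<And>k. norm (u k) \<le> K"
    using assms(1) unfolding Bseq_def by blast
  have "norm (inner (u k) (v k)) \<le> K * norm (v k)" for k
  proof -
    have "norm (inner (u k) (v k)) \<le> norm (u k) * norm (v k)"
      by (simp add: Cauchy_Schwarz_ineq2)
    also have "\<dots> \<le> K * norm (v k)"
      by (rule mult_right_mono[OF K norm_ge_zero])
    finally show ?thesis .
  qed
  then have "\<forall>\<^sub>F k in sequentially. norm (inner (u k) (v k)) \<le> K * norm (v k)"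
    by simp
  from Lim_null_comparison[OF this tendsto_mult_right_zero[OF tendsto_norm_zero[OF assms(2)]]]
  show ?thesis .
qed

lemma tendsto_0_if_Bseq_scaleR_at_top:
  fixes v :: "nat \<Rightarrow> 'a::real_normed_vector"
  assumes "Bseq (\<lambda>k. a k *\<^sub>R v k)" and a: "filterlim a at_top sequentially"
  shows "v \<longlonglongrightarrow> 0"
proof -
  obtain K where K: "\<And>k. norm (a k *\<^sub>R v k) \<le> K"
    using assms(1) unfolding Bseq_def by blast
  have "\<forall>\<^sub>F k in sequentially. 0 < a k"
    using a by (simp add: filterlim_at_top_dense)
  then have "\<forall>\<^sub>F k in sequentially. norm (v k) \<le> K * inverse (a k)"
  proof (rule eventually_mono)
    fix k
    assume "0 < a k"
    then show "norm (v k) \<le> K * inverse (a k)"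
      using K[of k] by (simp add: field_simps)
  qed
  moreover have "(\<lambda>k. K * inverse (a k)) \<longlonglongrightarrow> 0"
    by (rule tendsto_mult_right_zero[OF tendsto_inverse_0_at_top[OF a]])
  ultimately show ?thesis
    by (rule Lim_null_comparison)
qed

text \<open>Since \<open>d\<^sub>k\<^sub>+\<^sub>1\<^sup>2 (1 - 1/d\<^sub>k\<^sub>+\<^sub>1) \<le> d\<^sub>k\<^sup>2\<close>, the weighted sequence \<open>d\<^sub>k\<^sup>2 b\<^sub>k\<^sub>+\<^sub>1\<close> can only decrease
  while it is negative.\<close>
lemma weighted_averaging_lower_bound:
  fixes b d :: "nat \<Rightarrow> real"
  assumes d_ge1: "\<And>k. 1 \<le> d k"
    and d_growth: "\<And>k. (d (Suc k))\<^sup>2 - d (Suc k) \<le> (d k)\<^sup>2"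
    and b_Suc: "\<And>k. J \<le> k \<Longrightarrow> (1 - 1 / d k) * b k \<le> b (Suc k)"
    and "J \<le> k"
  shows "min 0 ((d J)\<^sup>2 * b (Suc J)) \<le> (d k)\<^sup>2 * b (Suc k)"
proof -
  define P where "P k = (d k)\<^sup>2 * b (Suc k)" for k
  have P_Suc: "min 0 (P k) \<le> P (Suc k)" if "J \<le> k" for k
  proof -
    have "(d (Suc k))\<^sup>2 * ((1 - 1 / d (Suc k)) * b (Suc k)) \<le> P (Suc k)"
      unfolding P_def using b_Suc[of "Suc k"] that by (intro mult_left_mono) auto
    moreover have "(d (Suc k))\<^sup>2 * ((1 - 1 / d (Suc k)) * b (Suc k))
        = ((d (Suc k))\<^sup>2 - d (Suc k)) * b (Suc k)"
      using d_ge1[of "Suc k"] by (simp add: field_simps power2_eq_square)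
    moreover have "min 0 (P k) \<le> ((d (Suc k))\<^sup>2 - d (Suc k)) * b (Suc k)"
    proof (cases "0 \<le> b (Suc k)")
      case True
      then show ?thesis
        using d_ge1[of "Suc k"] by (simp add: power2_eq_square min.coboundedI1)
    next
      case False
      then show ?thesis
        unfolding P_def using d_growth[of k] by (auto intro!: min.coboundedI2 mult_right_mono_neg)
    qed
    ultimately show ?thesis
      by linarith
  qed
  show ?thesis
    unfolding P_def[symmetric] using \<open>J \<le> k\<close>
  proof (induction k rule: dec_induct)
    case (step k)
    then show ?case
      using P_Suc[of k] by (auto simp: min_def split: if_splits)
  qed simp
qed

lemma averaging_eventually_ge:
  fixes a w d :: "nat \<Rightarrow> real"
  assumes d_ge1: "\<And>k. 1 \<le> d k"
    and d_growth: "\<And>k. (d (Suc k))\<^sup>2 - d (Suc k) \<le> (d k)\<^sup>2"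
    and d_at_top: "filterlim d at_top sequentially"
    and a_Suc: "\<And>k. a (Suc k) = (1 - 1 / d k) * a k + 1 / d k * w k"
    and w_ge: "\<And>\<epsilon>. 0 < \<epsilon> \<Longrightarrow> \<forall>\<^sub>F k in sequentially. - \<epsilon> \<le> w k"
    and "0 < \<epsilon>"
  shows "\<forall>\<^sub>F k in sequentially. - \<epsilon> \<le> a k"
proof -
  define b where "b k = a k + \<epsilon> / 2" for k
  obtain J where J: "\<And>k. J \<le> k \<Longrightarrow> - (\<epsilon> / 2) \<le> w k"
    using w_ge[of "\<epsilon> / 2"] \<open>0 < \<epsilon>\<close> by (auto simp: eventually_sequentially)
  have b_Suc: "(1 - 1 / d k) * b k \<le> b (Suc k)" if "J \<le> k" for k
  proof -
    have "b (Suc k) - (1 - 1 / d k) * b k = (w k + \<epsilon> / 2) / d k"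
      using d_ge1[of k] unfolding b_def a_Suc by (simp add: field_simps)
    also have "\<dots> \<ge> 0"
      using J[OF that] d_ge1[of k] by simp
    finally show ?thesis
      by simp
  qed
  define m where "m = min 0 ((d J)\<^sup>2 * b (Suc J))"
  have "(\<lambda>k. m * (inverse (d k))\<^sup>2) \<longlonglongrightarrow> m * 0\<^sup>2"
    by (intro tendsto_intros tendsto_inverse_0_at_top d_at_top)
  then have "\<forall>\<^sub>F k in sequentially. - (\<epsilon> / 2) < m * (inverse (d k))\<^sup>2"
    by (rule order_tendstoD) (use \<open>0 < \<epsilon>\<close> in simp)
  then have "\<forall>\<^sub>F k in sequentially. - \<epsilon> \<le> a (Suc k)"
    using eventually_ge_at_top[of J]
  proof eventually_elim
    case (elim k)
    have "m * (inverse (d k))\<^sup>2 \<le> ((d k)\<^sup>2 * b (Suc k)) * (inverse (d k))\<^sup>2"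
      unfolding m_def using weighted_averaging_lower_bound[of d J b, OF d_ge1 d_growth b_Suc elim(2)]
      by (intro mult_right_mono) auto
    also have "\<dots> = b (Suc k)"
      using d_ge1[of k] by (simp add: field_simps power2_eq_square)
    finally show ?case
      using elim(1) unfolding b_def by linarith
  qed
  then show ?thesis
    using eventually_sequentially_Suc[of "\<lambda>k. - \<epsilon> \<le> a k"] by simp
qed

lemma momentum_three_point_ineq:
  fixes a a0 y y0 \<xi> :: "'a::real_inner"
  assumes "0 \<le> \<kappa>" "\<kappa> \<le> 1" "0 \<le> \<epsilon>" "1/2 + \<epsilon>/2 \<le> c"
    and a0: "a0 = y + (c - 1) *\<^sub>R \<xi>" and y0: "y0 = y - \<xi>"
  shows "1/2 * (norm a)\<^sup>2 - 1/2 * (norm a0)\<^sup>2 + \<epsilon>/2 * (norm y)\<^sup>2 - \<epsilon>/2 * (norm y0)\<^sup>2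
    \<le> inner (a - a0 + \<epsilon> *\<^sub>R \<xi>) a - \<kappa> / 2 * (norm (a - a0 + \<epsilon> *\<^sub>R \<xi>))\<^sup>2"
proof -
  define D where "D = a - a0 + \<epsilon> *\<^sub>R \<xi>"
  have "inner D a - \<kappa> / 2 * (norm D)\<^sup>2
      - (1/2 * (norm a)\<^sup>2 - 1/2 * (norm a0)\<^sup>2 + \<epsilon>/2 * (norm y)\<^sup>2 - \<epsilon>/2 * (norm y0)\<^sup>2)
    = (1 - \<kappa>)/2 * (norm D)\<^sup>2 + \<epsilon> * (c - 1/2 - \<epsilon>/2) * (norm \<xi>)\<^sup>2"
    unfolding D_def a0 y0
    by (simp add: power2_norm_eq_inner inner_simps inner_commute) (simp add: field_simps)
  moreover have "0 \<le> (1 - \<kappa>)/2 * (norm D)\<^sup>2 + \<epsilon> * (c - 1/2 - \<epsilon>/2) * (norm \<xi>)\<^sup>2"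
    using assms by (intro add_nonneg_nonneg mult_nonneg_nonneg) auto
  ultimately show ?thesis
    unfolding D_def by linarith
qed

section \<open>The subproblem of the method\<close>

lemma inner_vector_matrix_mult: "inner x (y v* A) = inner (A *v x) (y :: real^'m)"
  by (metis dot_lmul_matrix inner_commute)

definition aalm_obj_grad :: "real^'n \<Rightarrow> real^'n^'m \<Rightarrow> real^'m \<Rightarrow> real \<Rightarrow> real \<Rightarrow> real \<Rightarrow> real^'n
    \<Rightarrow> real^'m \<Rightarrow> real \<Rightarrow> real^'m \<Rightarrow> real^'n \<Rightarrow> real^'n" where
  "aalm_obj_grad g A b \<beta> \<gamma> \<delta> xb p c r y =
     g + \<beta> *\<^sub>R (transpose A *v (A *v y - b)) + (1 / \<gamma>) *\<^sub>R (y - xb)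
       + transpose A *v (p + (\<delta> * c) *\<^sub>R (c *\<^sub>R (A *v y) - r))"

lemma has_derivative_aalm_obj:
  assumes "(h has_derivative (\<lambda>v. inner g v)) (at y)"
  shows "(aalm_obj h A b \<beta> \<gamma> \<delta> xb p c r has_derivative
      (\<lambda>v. inner (aalm_obj_grad g A b \<beta> \<gamma> \<delta> xb p c r y) v)) (at y)"
proof -
  have "((\<lambda>z. A *v z) has_derivative (\<lambda>z. A *v z)) (at y)"
    by (rule bounded_linear_imp_has_derivative) simp
  then show ?thesis
    unfolding aalm_obj_def[abs_def] aalm_obj_grad_def power2_norm_eq_inner
    by (cases "\<gamma> = 0") (auto intro!: derivative_eq_intros assms
        simp: fun_eq_iff inner_add_left inner_add_right inner_diff_left inner_diff_right inner_commute algebra_simps inner_vector_matrix_mult)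
qed

lemma aalm_obj_grad_eq_0_if_minimizer:
  assumes "(h has_derivative (\<lambda>v. inner g v)) (at y)"
    and "\<And>z. aalm_obj h A b \<beta> \<gamma> \<delta> xb p c r y \<le> aalm_obj h A b \<beta> \<gamma> \<delta> xb p c r z"
  shows "aalm_obj_grad g A b \<beta> \<gamma> \<delta> xb p c r y = 0"
proof -
  have "(\<lambda>v. inner (aalm_obj_grad g A b \<beta> \<gamma> \<delta> xb p c r y) v) = (\<lambda>v. 0)"
    by (rule differential_zero_maxmin[of y UNIV, OF _ _ has_derivative_aalm_obj[OF assms(1)]])
      (use assms(2) in auto)
  then show ?thesis
    by (metis inner_eq_zero_iff)
qed

text \<open>Both variants of the \<open>x\<close>-update satisfy this condition: \<open>y\<close> is stationary for the subproblem
  with \<open>f\<close> replaced by a linear function of slope \<open>g\<close>, and \<open>g\<close> is a subgradient of \<open>f\<close> at \<open>y\<close>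
  up to the error \<open>L/2 \<parallel>y - xb\<parallel>\<^sup>2\<close> (\<open>L = 0\<close> for the exact update).\<close>
definition aalm_inexact_step :: "(real^'n \<Rightarrow> real) \<Rightarrow> real^'n^'m \<Rightarrow> real^'m \<Rightarrow> real \<Rightarrow> real \<Rightarrow> real
    \<Rightarrow> real \<Rightarrow> real^'n \<Rightarrow> real^'m \<Rightarrow> real \<Rightarrow> real^'m \<Rightarrow> real^'n \<Rightarrow> bool" where
  "aalm_inexact_step f A b \<beta> \<gamma> \<delta> L xb p c r y \<longleftrightarrow>
     (\<exists>g. (\<forall>z. f y + inner g (z - y) - L / 2 * (norm (y - xb))\<^sup>2 \<le> f z)
        \<and> aalm_obj_grad g A b \<beta> \<gamma> \<delta> xb p c r y = 0)"

lemma aalm_inexact_step_if_minimizer: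
  assumes "convex_on UNIV f" and "(f has_derivative (\<lambda>h. inner (df y) h)) (at y)"
    and "\<And>z. aalm_obj f A b \<beta> \<gamma> \<delta> xb p c r y \<le> aalm_obj f A b \<beta> \<gamma> \<delta> xb p c r z"
  shows "aalm_inexact_step f A b \<beta> \<gamma> \<delta> 0 xb p c r y"
  unfolding aalm_inexact_step_def
  using convex_on_gradient_ineq[OF assms(1,2)] aalm_obj_grad_eq_0_if_minimizer[OF assms(2,3)]
  by auto

lemma aalm_inexact_step_if_linearized_minimizer:
  assumes "convex_on UNIV f" and df: "\<And>z. (f has_derivative (\<lambda>h. inner (df z) h)) (at z)"
    and "\<And>u v. norm (df u - df v) \<le> L * norm (u - v)"
    and "\<And>z. aalm_obj (\<lambda>v. inner (df xb) v) A b \<beta> \<gamma> \<delta> xb p c r y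
      \<le> aalm_obj (\<lambda>v. inner (df xb) v) A b \<beta> \<gamma> \<delta> xb p c r z"
  shows "aalm_inexact_step f A b \<beta> \<gamma> \<delta> L xb p c r y"
  unfolding aalm_inexact_step_def
proof (intro exI conjI allI)
  fix z
  have "f xb + inner (df xb) (z - xb) \<le> f z"
    by (rule convex_on_gradient_ineq[OF assms(1) df])
  moreover have "f y \<le> f xb + inner (df xb) (y - xb) + L / 2 * (norm (y - xb))\<^sup>2"
    by (rule descent_lemma[OF df assms(3)])
  ultimately show "f y + inner (df xb) (z - y) - L / 2 * (norm (y - xb))\<^sup>2 \<le> f z"
    by (simp add: inner_diff_right)
  show "aalm_obj_grad (df xb) A b \<beta> \<gamma> \<delta> xb p c r y = 0"
    by (rule aalm_obj_grad_eq_0_if_minimizer[OF _ assms(4)])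
      (rule bounded_linear_imp_has_derivative[OF bounded_linear_inner_right])
qed

lemma KKT_if_minimizes_augmented_Lagrangian:
  fixes f :: "real^'n \<Rightarrow> real" and A :: "real^'n^'m"
  assumes df: "(f has_derivative (\<lambda>h. inner (df xs) h)) (at xs)" and feasible: "A *v xs = b"
    and min: "\<And>z. f xs \<le> f z + \<beta> / 2 * (norm (A *v z - b))\<^sup>2 + inner ls (A *v z - b)"
  shows "(xs, ls) \<in> KKT_set A b df"
proof -
  have "((\<lambda>z. A *v z) has_derivative (\<lambda>z. A *v z)) (at xs)"
    by (rule bounded_linear_imp_has_derivative) simp
  then have "((\<lambda>z. f z + \<beta> / 2 * (norm (A *v z - b))\<^sup>2 + inner ls (A *v z - b)) has_derivative
      (\<lambda>v. inner (df xs + transpose A *v ls) v)) (at xs)"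
    unfolding power2_norm_eq_inner using feasible
    by (auto intro!: derivative_eq_intros df
        simp: fun_eq_iff inner_add_left inner_add_right inner_diff_left inner_diff_right inner_commute
          algebra_simps inner_vector_matrix_mult)
  then have "(\<lambda>v. inner (df xs + transpose A *v ls) v) = (\<lambda>v. 0)"
    by (rule differential_zero_maxmin[of xs UNIV, rotated 2]) (use min feasible in auto)
  then show ?thesis
    unfolding KKT_set_def using feasible by (metis (mono_tags) case_prodI inner_eq_zero_iff mem_Collect_eq)
qed

lemma aalm_inexact_step_cases:
  assumes "convex_on UNIV f" and "\<And>z. (f has_derivative (\<lambda>h. inner (df z) h)) (at z)"
    and "(\<forall>k\<ge>1. \<forall>z. aalm_obj f A b \<beta> \<gamma> \<delta> (xb k) (p k) (c k) (r k) (y k)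
              \<le> aalm_obj f A b \<beta> \<gamma> \<delta> (xb k) (p k) (c k) (r k) z)
      \<or> ((\<exists>L>0. (\<forall>u v. norm (df u - df v) \<le> L * norm (u - v)) \<and> \<gamma> \<le> 1 / L)
        \<and> (\<forall>k\<ge>1. \<forall>z. aalm_obj (\<lambda>v. inner (df (xb k)) v) A b \<beta> \<gamma> \<delta> (xb k) (p k) (c k) (r k) (y k)
              \<le> aalm_obj (\<lambda>v. inner (df (xb k)) v) A b \<beta> \<gamma> \<delta> (xb k) (p k) (c k) (r k) z))"
  shows "\<exists>Lp\<ge>0. Lp * \<gamma> \<le> 1 \<and> (\<forall>k\<ge>1. aalm_inexact_step f A b \<beta> \<gamma> \<delta> Lp (xb k) (p k) (c k) (r k) (y k))"
  using assms(3)
proof (elim disjE conjE exE)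
  assume "\<forall>k\<ge>1. \<forall>z. aalm_obj f A b \<beta> \<gamma> \<delta> (xb k) (p k) (c k) (r k) (y k)
    \<le> aalm_obj f A b \<beta> \<gamma> \<delta> (xb k) (p k) (c k) (r k) z"
  then show ?thesis
    by (auto intro!: exI[of _ 0] aalm_inexact_step_if_minimizer[OF assms(1,2)])
next
  fix L
  assume "0 < L" "\<forall>u v. norm (df u - df v) \<le> L * norm (u - v)" "\<gamma> \<le> 1 / L"
    and "\<forall>k\<ge>1. \<forall>z. aalm_obj (\<lambda>v. inner (df (xb k)) v) A b \<beta> \<gamma> \<delta> (xb k) (p k) (c k) (r k) (y k)
      \<le> aalm_obj (\<lambda>v. inner (df (xb k)) v) A b \<beta> \<gamma> \<delta> (xb k) (p k) (c k) (r k) z"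
  then show ?thesis
    by (auto intro!: exI[of _ L] aalm_inexact_step_if_linearized_minimizer[OF assms(1,2)]
        simp: field_simps)
qed

section \<open>Convergence analysis\<close>

locale aalm_iterates =
  fixes f :: "real^'n \<Rightarrow> real" and df :: "real^'n \<Rightarrow> real^'n"
    and A :: "real^'n^'m" and b :: "real^'m"
    and t :: "nat \<Rightarrow> real" and \<eta> \<gamma> \<delta> \<beta> Lp :: real
    and x :: "nat \<Rightarrow> real^'n" and lam :: "nat \<Rightarrow> real^'m"
    and xh :: "real^'n" and lh :: "real^'m"
  assumes f_convex: "convex_on UNIV f"
    and f_grad: "\<And>z. (f has_derivative (\<lambda>h. inner (df z) h)) (at z)"
    and KKT_point: "(xh, lh) \<in> KKT_set A b df"
    and t_ge1: "\<And>k. 1 \<le> k \<Longrightarrow> 1 \<le> t k"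
    and t_growth: "\<And>k. 1 \<le> k \<Longrightarrow> (t (Suc k))\<^sup>2 - (t k)\<^sup>2 \<le> \<eta> * t (Suc k)"
    and t_at_top: "filterlim t at_top sequentially"
    and eta: "0 < \<eta>" "\<eta> \<le> 1"
    and gamma: "0 < \<gamma>" and delta: "0 < \<delta>" and beta: "0 \<le> \<beta>"
    and Lp: "0 \<le> Lp" "Lp * \<gamma> \<le> 1"
    and x_step: "\<And>k. 1 \<le> k \<Longrightarrow> aalm_inexact_step f A b \<beta> \<gamma> \<delta> Lp (aalm_bar t x k)
      (aalm_c t \<eta> k *\<^sub>R aalm_bar t lam k - aalm_alpha t \<eta> k *\<^sub>R lam k) (aalm_c t \<eta> k)
      (aalm_alpha t \<eta> k *\<^sub>R (A *v x k) + b) (x (Suc k))"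
    and lam_step: "\<And>k. 1 \<le> k \<Longrightarrow> lam (Suc k) = aalm_bar t lam k
      + \<delta> *\<^sub>R (aalm_c t \<eta> k *\<^sub>R (A *v x (Suc k)) - (aalm_alpha t \<eta> k *\<^sub>R (A *v x k) + b))"
begin

abbreviation c :: "nat \<Rightarrow> real" where "c \<equiv> aalm_c t \<eta>"

abbreviation x_bar :: "nat \<Rightarrow> real^'n" where "x_bar \<equiv> aalm_bar t x"

definition \<epsilon> :: real where "\<epsilon> = (1 - \<eta>) / \<eta>"

lemma eps_nonneg: "0 \<le> \<epsilon>"
  unfolding \<epsilon>_def using eta by simp

lemma one_plus_eps_le_c: "1 + \<epsilon> \<le> c k"
proof -
  have "1 / \<eta> \<le> t (Suc k) / \<eta>"
    using t_ge1[of "Suc k"] eta by (simp add: divide_right_mono)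
  then show ?thesis
    unfolding \<epsilon>_def aalm_c_def using eta by (simp add: diff_divide_distrib)
qed

lemma c_ge1: "1 \<le> c k"
  using one_plus_eps_le_c[of k] eps_nonneg by linarith

lemma c_pos: "0 < c k"
  using c_ge1[of k] by linarith

lemma c_growth: "(c (Suc k))\<^sup>2 - c (Suc k) \<le> (c k)\<^sup>2"
proof -
  have "(t (Suc (Suc k)))\<^sup>2 - \<eta> * t (Suc (Suc k)) \<le> (t (Suc k))\<^sup>2"
    using t_growth[of "Suc k"] by simp
  then have "((t (Suc (Suc k)))\<^sup>2 - \<eta> * t (Suc (Suc k))) / \<eta>\<^sup>2 \<le> (t (Suc k))\<^sup>2 / \<eta>\<^sup>2"
    by (rule divide_right_mono) simp
  then show ?thesis
    unfolding aalm_c_def using eta by (simp add: field_simps power2_eq_square)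
qed

lemma c_at_top: "filterlim c at_top sequentially"
proof -
  have "filterlim (\<lambda>k. t (Suc k)) at_top sequentially"
    using t_at_top filterlim_sequentially_Suc by blast
  then have "filterlim (\<lambda>k. 1 / \<eta> * t (Suc k)) at_top sequentially"
    using eta by (intro filterlim_tendsto_pos_mult_at_top[OF tendsto_const]) auto
  then show ?thesis
    unfolding aalm_c_def[abs_def] by simp
qed

lemma alpha_eq: "aalm_alpha t \<eta> k = c k - 1"
  unfolding aalm_alpha_def aalm_c_def using eta by (simp add: diff_divide_distrib)

text \<open>\<open>u\<^sub>k\<^sub>+\<^sub>1\<close> is the convex combination of \<open>u\<^sub>k\<close> and \<open>hat u k\<close> with weight \<open>1 / c\<^sub>k\<close>;
  the Lyapunov function below measures the distance of \<open>hat x k\<close> and \<open>hat lam k\<close> to the KKT point.\<close>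
definition hat :: "(nat \<Rightarrow> 'a::real_vector) \<Rightarrow> nat \<Rightarrow> 'a" where
  "hat u k = u k + c k *\<^sub>R (u (Suc k) - u k)"

lemma Suc_eq_convex_comb_hat: "u (Suc k) = (1 - 1 / c k) *\<^sub>R u k + (1 / c k) *\<^sub>R hat u k"
  unfolding hat_def using c_pos[of k] by (simp add: algebra_simps)

lemma c_scaleR_Suc_minus_bar:
  "c (Suc k) *\<^sub>R (u (Suc (Suc k)) - aalm_bar t u (Suc k)) = hat u (Suc k) - hat u k + \<epsilon> *\<^sub>R (u (Suc k) - u k)"
proof -
  have "t (Suc (Suc k)) \<noteq> 0"
    using t_ge1[of "Suc (Suc k)"] by simp
  then have S: "c (Suc k) * ((t (Suc k) - 1) / t (Suc (Suc k))) = c k - 1 - \<epsilon>"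
    unfolding \<epsilon>_def aalm_c_def using eta by (simp add: field_simps)
  have "c (Suc k) *\<^sub>R (u (Suc (Suc k)) - aalm_bar t u (Suc k))
      = c (Suc k) *\<^sub>R (u (Suc (Suc k)) - u (Suc k))
        - (c (Suc k) * ((t (Suc k) - 1) / t (Suc (Suc k)))) *\<^sub>R (u (Suc k) - u k)"
    unfolding aalm_bar_def by (simp add: algebra_simps)
  also have "\<dots> = c (Suc k) *\<^sub>R (u (Suc (Suc k)) - u (Suc k)) - (c k - 1 - \<epsilon>) *\<^sub>R (u (Suc k) - u k)"
    unfolding S ..
  also have "\<dots> = hat u (Suc k) - hat u k + \<epsilon> *\<^sub>R (u (Suc k) - u k)"
    unfolding hat_def by (simp add: algebra_simps)
  finally show ?thesis .
qed

lemma lam_Suc_minus_bar: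
  assumes "1 \<le> k"
  shows "lam (Suc k) - aalm_bar t lam k = \<delta> *\<^sub>R (A *v hat x k - b)"
  using lam_step[OF assms]
  by (simp add: hat_def alpha_eq matrix_vector_right_distrib matrix_vector_mult_diff_distrib
      matrix_vector_mult_scaleR algebra_simps)

lemma x_step_stationary:
  assumes "1 \<le> k"
  shows "\<exists>g. (\<forall>z. f (x (Suc k)) + inner g (z - x (Suc k)) - Lp / 2 * (norm (x (Suc k) - x_bar k))\<^sup>2 \<le> f z)
    \<and> g + \<beta> *\<^sub>R (transpose A *v (A *v x (Suc k) - b)) + (1 / \<gamma>) *\<^sub>R (x (Suc k) - x_bar k)
      + transpose A *v hat lam k = 0"
proof -
  have "lam (Suc k) - aalm_bar t lam k
      = \<delta> *\<^sub>R (c k *\<^sub>R (A *v x (Suc k)) - (aalm_alpha t \<eta> k *\<^sub>R (A *v x k) + b))"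
    using lam_step[OF assms] by simp
  then have "(\<delta> * c k) *\<^sub>R (c k *\<^sub>R (A *v x (Suc k)) - (aalm_alpha t \<eta> k *\<^sub>R (A *v x k) + b))
      = c k *\<^sub>R (lam (Suc k) - aalm_bar t lam k)"
    by (simp add: mult.commute)
  then have hat_lam: "c k *\<^sub>R aalm_bar t lam k - aalm_alpha t \<eta> k *\<^sub>R lam k
      + (\<delta> * c k) *\<^sub>R (c k *\<^sub>R (A *v x (Suc k)) - (aalm_alpha t \<eta> k *\<^sub>R (A *v x k) + b))
    = hat lam k"
    unfolding hat_def alpha_eq by (simp add: algebra_simps)
  show ?thesis
    using x_step[OF assms] unfolding aalm_inexact_step_def aalm_obj_grad_def hat_lam by blast
qed

lemma KKT_feasible: "A *v xh = b" and KKT_stationary: "df xh + transpose A *v lh = 0"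
  using KKT_point unfolding KKT_set_def by auto

definition aug_lagr :: "real^'n \<Rightarrow> real^'m \<Rightarrow> real" where
  "aug_lagr z u = f z + \<beta> / 2 * (norm (A *v z - b))\<^sup>2 + inner u (A *v z - b)"

text \<open>Since \<open>xh\<close> is feasible, \<open>f xh = aug_lagr xh lh\<close>.\<close>
definition gap :: "real^'n \<Rightarrow> real" where
  "gap z = aug_lagr z lh - f xh"

lemma gap_nonneg: "0 \<le> gap z"
proof -
  have "f xh + inner (df xh) (z - xh) \<le> f z"
    by (rule convex_on_gradient_ineq[OF f_convex f_grad])
  moreover have "inner (df xh) (z - xh) = - inner lh (A *v z - b)"
  proof -
    have "df xh = - (transpose A *v lh)"
      using KKT_stationary by (simp add: eq_neg_iff_add_eq_0)
    then show ?thesis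
      using KKT_feasible by (simp add: dot_lmul_matrix matrix_vector_mult_diff_distrib)
  qed
  moreover have "0 \<le> \<beta> / 2 * (norm (A *v z - b))\<^sup>2"
    using beta by simp
  ultimately show ?thesis
    unfolding gap_def aug_lagr_def by linarith
qed

lemma gap_KKT_point: "gap xh = 0"
  unfolding gap_def aug_lagr_def using KKT_feasible by simp

lemma gap_step_ineq:
  assumes "1 \<le> k"
  shows "gap (x (Suc k)) - inner (hat lam k - lh) (A *v (z - x (Suc k)))
      - inner (x (Suc k) - x_bar k) (z - x (Suc k)) / \<gamma> - Lp / 2 * (norm (x (Suc k) - x_bar k))\<^sup>2
    \<le> gap z"
proof -
  define y where "y = x (Suc k)"
  define q where "q = y - x_bar k"
  obtain g where model: "f y + inner g (z - y) - Lp / 2 * (norm q)\<^sup>2 \<le> f z"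
    and stationary: "g + \<beta> *\<^sub>R (transpose A *v (A *v y - b)) + (1 / \<gamma>) *\<^sub>R q + transpose A *v hat lam k = 0"
    using x_step_stationary[OF assms] unfolding y_def[symmetric] q_def[symmetric] by blast
  have "inner g (z - y)
      = inner (g + \<beta> *\<^sub>R (transpose A *v (A *v y - b)) + (1 / \<gamma>) *\<^sub>R q + transpose A *v hat lam k) (z - y)
        - \<beta> * inner (A *v y - b) (A *v (z - y)) - inner q (z - y) / \<gamma> - inner (hat lam k) (A *v (z - y))"
    by (simp add: inner_add_left dot_lmul_matrix divide_inverse)
  then have g: "inner g (z - y)
      = - \<beta> * inner (A *v y - b) (A *v (z - y)) - inner q (z - y) / \<gamma> - inner (hat lam k) (A *v (z - y))"
    unfolding stationary by simp
  have sq: "\<beta> / 2 * (norm (A *v y - b))\<^sup>2 + \<beta> * inner (A *v y - b) (A *v (z - y))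
      \<le> \<beta> / 2 * (norm (A *v z - b))\<^sup>2"
  proof -
    define a d where "a = A *v y - b" and "d = A *v (z - y)"
    have "A *v z - b = a + d"
      unfolding a_def d_def by (simp add: matrix_vector_mult_diff_distrib)
    then have "\<beta> / 2 * (norm a)\<^sup>2 + \<beta> * inner a d \<le> \<beta> / 2 * (norm (A *v z - b))\<^sup>2"
      using mult_nonneg_nonneg[OF beta zero_le_power2[of "norm d"]]
      by (simp add: power2_norm_eq_inner inner_add_left inner_add_right inner_commute algebra_simps)
    then show ?thesis
      unfolding a_def d_def .
  qed
  have "inner lh (A *v z - b) = inner lh (A *v y - b) + inner lh (A *v (z - y))"
    by (simp add: matrix_vector_mult_diff_distrib inner_diff_right)
  moreover have "inner (hat lam k - lh) (A *v (z - y))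
      = inner (hat lam k) (A *v (z - y)) - inner lh (A *v (z - y))"
    by (simp add: inner_diff_left)
  ultimately show ?thesis
    using model g sq unfolding gap_def aug_lagr_def y_def[symmetric] q_def[symmetric] by linarith
qed

text \<open>The inequalities of \<open>gap_step_ineq\<close> at \<open>z = x k\<close> and at \<open>z = xh\<close>, weighted by \<open>c\<^sub>k\<^sup>2 - c\<^sub>k\<close>
  and \<open>c\<^sub>k\<close>, so that all test points combine into \<open>hat x k\<close>.\<close>
lemma gap_combination:
  assumes "1 \<le> k"
  shows "(c k)\<^sup>2 * gap (x (Suc k)) + c k * inner (hat lam k - lh) (A *v hat x k - b)
      + inner (c k *\<^sub>R (x (Suc k) - x_bar k)) (hat x k - xh) / \<gamma>
      - Lp / 2 * (norm (c k *\<^sub>R (x (Suc k) - x_bar k)))\<^sup>2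
    \<le> ((c k)\<^sup>2 - c k) * gap (x k)"
proof -
  define y where "y = x (Suc k)"
  define q where "q = y - x_bar k"
  define N where "N = hat lam k - lh"
  note ineq = gap_step_ineq[OF assms, folded y_def, folded q_def N_def]
  have at_x: "((c k)\<^sup>2 - c k) * (gap y - inner N (A *v (x k - y)) - inner q (x k - y) / \<gamma> - Lp / 2 * (norm q)\<^sup>2)
      \<le> ((c k)\<^sup>2 - c k) * gap (x k)"
    using ineq[of "x k"] c_ge1[of k] by (intro mult_left_mono) (auto simp: power2_eq_square)
  have at_xh: "c k * (gap y - inner N (A *v (xh - y)) - inner q (xh - y) / \<gamma> - Lp / 2 * (norm q)\<^sup>2) \<le> 0"
    using ineq[of xh] c_pos[of k] gap_KKT_point by (simp add: mult_nonneg_nonpos)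
  have V: "((c k)\<^sup>2 - c k) *\<^sub>R (x k - y) + c k *\<^sub>R (xh - y) = - (c k *\<^sub>R (hat x k - xh))"
    unfolding hat_def y_def by (simp add: algebra_simps power2_eq_square)
  have "((c k)\<^sup>2 - c k) * inner N (A *v (x k - y)) + c k * inner N (A *v (xh - y))
      = inner N (A *v (((c k)\<^sup>2 - c k) *\<^sub>R (x k - y) + c k *\<^sub>R (xh - y)))"
    by (simp add: matrix_vector_right_distrib matrix_vector_mult_scaleR inner_add_right)
  also have "\<dots> = - (c k * inner N (A *v hat x k - b))"
    unfolding V using KKT_feasible
    by (simp add: matrix_vector_mult_scaleR matrix_vector_mult_diff_distrib inner_diff_right algebra_simps)
  finally have lin_N: "((c k)\<^sup>2 - c k) * inner N (A *v (x k - y)) + c k * inner N (A *v (xh - y))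
      = - (c k * inner N (A *v hat x k - b))" .
  have "((c k)\<^sup>2 - c k) * inner q (x k - y) + c k * inner q (xh - y)
      = inner q (((c k)\<^sup>2 - c k) *\<^sub>R (x k - y) + c k *\<^sub>R (xh - y))"
    by (simp add: inner_add_right)
  also have "\<dots> = - inner (c k *\<^sub>R q) (hat x k - xh)"
    unfolding V by simp
  finally have lin_q: "(((c k)\<^sup>2 - c k) * inner q (x k - y) + c k * inner q (xh - y)) / \<gamma>
      = - (inner (c k *\<^sub>R q) (hat x k - xh) / \<gamma>)"
    by simp
  have sq: "Lp / 2 * (norm (c k *\<^sub>R q))\<^sup>2 = (c k)\<^sup>2 * (Lp / 2 * (norm q)\<^sup>2)"
    by (simp add: power_mult_distrib)
  have expand: "((c k)\<^sup>2 - c k) * (G - a1 - b1 / \<gamma> - L) + c k * (G - a2 - b2 / \<gamma> - L)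
      = (c k)\<^sup>2 * G - (((c k)\<^sup>2 - c k) * a1 + c k * a2) - (((c k)\<^sup>2 - c k) * b1 + c k * b2) / \<gamma>
        - (c k)\<^sup>2 * L" for G a1 a2 b1 b2 L
    by (simp add: algebra_simps add_divide_distrib diff_divide_distrib)
  show ?thesis
    using at_x at_xh lin_N lin_q sq
      expand[of "gap y" "inner N (A *v (x k - y))" "inner q (x k - y)" "Lp / 2 * (norm q)\<^sup>2"
        "inner N (A *v (xh - y))" "inner q (xh - y)"]
    unfolding y_def[symmetric] q_def[symmetric] N_def[symmetric] by linarith
qed

definition primal_dist :: "nat \<Rightarrow> real" where
  "primal_dist k = 1/2 * (norm (hat x k - xh))\<^sup>2 + \<epsilon>/2 * (norm (x k - xh))\<^sup>2"

definition dual_dist :: "nat \<Rightarrow> real" where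
  "dual_dist k = 1/2 * (norm (hat lam k - lh))\<^sup>2 + \<epsilon>/2 * (norm (lam k - lh))\<^sup>2"

lemma c_ge_half: "1/2 + \<epsilon>/2 \<le> c k"
  using one_plus_eps_le_c[of k] eps_nonneg by linarith

lemma primal_dist_Suc_le:
  "primal_dist (Suc k) - primal_dist k
    \<le> inner (c (Suc k) *\<^sub>R (x (Suc (Suc k)) - x_bar (Suc k))) (hat x (Suc k) - xh)
      - Lp * \<gamma> / 2 * (norm (c (Suc k) *\<^sub>R (x (Suc (Suc k)) - x_bar (Suc k))))\<^sup>2"
proof -
  have "c (Suc k) *\<^sub>R (x (Suc (Suc k)) - x_bar (Suc k))
      = (hat x (Suc k) - xh) - (hat x k - xh) + \<epsilon> *\<^sub>R (x (Suc k) - x k)"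
    by (simp add: c_scaleR_Suc_minus_bar)
  moreover have "1/2 * (norm (hat x (Suc k) - xh))\<^sup>2 - 1/2 * (norm (hat x k - xh))\<^sup>2
      + \<epsilon>/2 * (norm (x (Suc k) - xh))\<^sup>2 - \<epsilon>/2 * (norm (x k - xh))\<^sup>2
    \<le> inner ((hat x (Suc k) - xh) - (hat x k - xh) + \<epsilon> *\<^sub>R (x (Suc k) - x k)) (hat x (Suc k) - xh)
      - Lp * \<gamma> / 2 * (norm ((hat x (Suc k) - xh) - (hat x k - xh) + \<epsilon> *\<^sub>R (x (Suc k) - x k)))\<^sup>2"
    by (rule momentum_three_point_ineq[OF _ Lp(2) eps_nonneg c_ge_half])
      (use Lp(1) gamma in \<open>auto simp: hat_def algebra_simps\<close>)
  ultimately show ?thesis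
    unfolding primal_dist_def by simp
qed

lemma dual_dist_Suc_le:
  "dual_dist (Suc k) - dual_dist k
    \<le> \<delta> * (c (Suc k) * inner (hat lam (Suc k) - lh) (A *v hat x (Suc k) - b))"
proof -
  have D: "(hat lam (Suc k) - lh) - (hat lam k - lh) + \<epsilon> *\<^sub>R (lam (Suc k) - lam k)
      = (\<delta> * c (Suc k)) *\<^sub>R (A *v hat x (Suc k) - b)"
    using c_scaleR_Suc_minus_bar[of k lam] lam_Suc_minus_bar[of "Suc k"] by (simp add: mult.commute)
  have "1/2 * (norm (hat lam (Suc k) - lh))\<^sup>2 - 1/2 * (norm (hat lam k - lh))\<^sup>2
      + \<epsilon>/2 * (norm (lam (Suc k) - lh))\<^sup>2 - \<epsilon>/2 * (norm (lam k - lh))\<^sup>2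
    \<le> inner ((hat lam (Suc k) - lh) - (hat lam k - lh) + \<epsilon> *\<^sub>R (lam (Suc k) - lam k)) (hat lam (Suc k) - lh)
      - 0 / 2 * (norm ((hat lam (Suc k) - lh) - (hat lam k - lh) + \<epsilon> *\<^sub>R (lam (Suc k) - lam k)))\<^sup>2"
    by (rule momentum_three_point_ineq[OF _ _ eps_nonneg c_ge_half])
      (auto simp: hat_def algebra_simps)
  then show ?thesis
    unfolding D dual_dist_def by (simp add: inner_commute)
qed

definition energy :: "nat \<Rightarrow> real" where
  "energy k = (c k)\<^sup>2 * gap (x (Suc k)) + primal_dist k / \<gamma> + dual_dist k / \<delta>"

lemma energy_Suc_le: "energy (Suc k) \<le> energy k"
proof -
  define cq where "cq = c (Suc k) *\<^sub>R (x (Suc (Suc k)) - x_bar (Suc k))"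
  have "(primal_dist (Suc k) - primal_dist k) / \<gamma>
      \<le> (inner cq (hat x (Suc k) - xh) - Lp * \<gamma> / 2 * (norm cq)\<^sup>2) / \<gamma>"
    by (rule divide_right_mono[OF primal_dist_Suc_le[of k, folded cq_def]]) (use gamma in simp)
  also have "\<dots> = inner cq (hat x (Suc k) - xh) / \<gamma> - Lp / 2 * (norm cq)\<^sup>2"
    using gamma by (simp add: field_simps)
  finally have primal: "primal_dist (Suc k) / \<gamma> - primal_dist k / \<gamma>
      \<le> inner cq (hat x (Suc k) - xh) / \<gamma> - Lp / 2 * (norm cq)\<^sup>2"
    by (simp add: diff_divide_distrib)
  have "(dual_dist (Suc k) - dual_dist k) / \<delta>
      \<le> c (Suc k) * inner (hat lam (Suc k) - lh) (A *v hat x (Suc k) - b)"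
    using dual_dist_Suc_le[of k] delta by (simp add: pos_divide_le_eq mult.commute)
  then have dual: "dual_dist (Suc k) / \<delta> - dual_dist k / \<delta>
      \<le> c (Suc k) * inner (hat lam (Suc k) - lh) (A *v hat x (Suc k) - b)"
    by (simp add: diff_divide_distrib)
  have "((c (Suc k))\<^sup>2 - c (Suc k)) * gap (x (Suc k)) \<le> (c k)\<^sup>2 * gap (x (Suc k))"
    by (rule mult_right_mono[OF c_growth gap_nonneg])
  then show ?thesis
    using gap_combination[of "Suc k", folded cq_def] primal dual unfolding energy_def by simp
qed

lemma energy_le: "energy k \<le> energy 0"
  by (rule decseqD[OF decseq_SucI[of energy, OF energy_Suc_le]]) simp

lemma energy_terms_le:
  "(c k)\<^sup>2 * gap (x (Suc k)) \<le> energy 0" "primal_dist k \<le> \<gamma> * energy 0" "dual_dist k \<le> \<delta> * energy 0"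
proof -
  have "0 \<le> primal_dist k" "0 \<le> dual_dist k"
    unfolding primal_dist_def dual_dist_def using eps_nonneg by simp_all
  moreover have "0 \<le> (c k)\<^sup>2 * gap (x (Suc k))"
    by (simp add: gap_nonneg)
  ultimately have "(c k)\<^sup>2 * gap (x (Suc k)) \<le> energy 0 \<and> primal_dist k / \<gamma> \<le> energy 0
      \<and> dual_dist k / \<delta> \<le> energy 0"
    using energy_le[of k] gamma delta unfolding energy_def
    by (smt (verit) divide_nonneg_pos)
  then show "(c k)\<^sup>2 * gap (x (Suc k)) \<le> energy 0" "primal_dist k \<le> \<gamma> * energy 0"
    "dual_dist k \<le> \<delta> * energy 0"
    using gamma delta by (simp_all add: pos_divide_le_eq mult.commute)
qed

lemma Bseq_hat_x: "Bseq (hat x)"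
proof (rule Bseq_if_dist_sq_le[where v = xh and C = "2 * \<gamma> * energy 0"])
  fix k
  have "1/2 * (norm (hat x k - xh))\<^sup>2 \<le> primal_dist k"
    unfolding primal_dist_def using eps_nonneg by simp
  then show "(norm (hat x k - xh))\<^sup>2 \<le> 2 * \<gamma> * energy 0"
    using energy_terms_le(2)[of k] by simp
qed

lemma Bseq_hat_lam: "Bseq (hat lam)"
proof (rule Bseq_if_dist_sq_le[where v = lh and C = "2 * \<delta> * energy 0"])
  fix k
  have "1/2 * (norm (hat lam k - lh))\<^sup>2 \<le> dual_dist k"
    unfolding dual_dist_def using eps_nonneg by simp
  then show "(norm (hat lam k - lh))\<^sup>2 \<le> 2 * \<delta> * energy 0"
    using energy_terms_le(3)[of k] by simp
qed

lemma Bseq_if_Bseq_hat: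
  fixes u :: "nat \<Rightarrow> 'a::real_normed_vector"
  shows "Bseq (hat u) \<Longrightarrow> Bseq u"
proof (rule Bseq_convex_recursion[of "\<lambda>k. 1 / c k" u "hat u"])
  show "0 \<le> 1 / c k" "1 / c k \<le> 1" for k
    using c_ge1[of k] by simp_all
qed (rule Suc_eq_convex_comb_hat)


lemma Bseq_x: "Bseq x"
  by (rule Bseq_if_Bseq_hat[OF Bseq_hat_x])

lemma Bseq_lam: "Bseq lam"
  by (rule Bseq_if_Bseq_hat[OF Bseq_hat_lam])

text \<open>Telescoping against this bounded potential is what makes the residual \<open>O(1/c\<^sub>k\<^sup>2)\<close>.\<close>
definition dual_potential :: "nat \<Rightarrow> real^'m" where
  "dual_potential k = (1 / \<delta>) *\<^sub>R (hat lam k + \<epsilon> *\<^sub>R lam k)"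

lemma c_scaleR_hat_residual:
  "c (Suc k) *\<^sub>R (A *v hat x (Suc k) - b) = dual_potential (Suc k) - dual_potential k"
proof -
  have "\<delta> *\<^sub>R (c (Suc k) *\<^sub>R (A *v hat x (Suc k) - b))
      = hat lam (Suc k) - hat lam k + \<epsilon> *\<^sub>R (lam (Suc k) - lam k)"
    using c_scaleR_Suc_minus_bar[of k lam] lam_Suc_minus_bar[of "Suc k"]
    by (simp add: scaleR_left_commute mult.commute)
  then have "(1 / \<delta>) *\<^sub>R (\<delta> *\<^sub>R (c (Suc k) *\<^sub>R (A *v hat x (Suc k) - b)))
      = (1 / \<delta>) *\<^sub>R (hat lam (Suc k) - hat lam k + \<epsilon> *\<^sub>R (lam (Suc k) - lam k))"
    by (rule arg_cong)
  then show ?thesis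
    unfolding dual_potential_def using delta by (simp add: algebra_simps)
qed

lemma Bseq_scaled_residual: "Bseq (\<lambda>k. (c k)\<^sup>2 *\<^sub>R (A *v x (Suc k) - b))"
proof -
  define G where "G = dual_potential"
  define Y where "Y k = (c k)\<^sup>2 *\<^sub>R (A *v x (Suc k) - b) - G k" for k
  define \<theta> where "\<theta> k = 1 - ((c (Suc k))\<^sup>2 - c (Suc k)) / (c k)\<^sup>2" for k
  have "Bseq G"
    unfolding G_def dual_potential_def[abs_def] by (intro Bseq_scaleR Bseq_plus Bseq_hat_lam Bseq_lam)
  have \<theta>: "0 \<le> \<theta> k" "\<theta> k \<le> 1" for k
    using c_growth[of k] c_pos[of k] c_ge1[of "Suc k"] unfolding \<theta>_def
    by (simp_all add: power2_eq_square)
  have "Y (Suc k) = (1 - \<theta> k) *\<^sub>R Y k + \<theta> k *\<^sub>R (- G k)" for k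
  proof -
    have "c (Suc k) *\<^sub>R (A *v hat x (Suc k) - b)
        = (c (Suc k))\<^sup>2 *\<^sub>R (A *v x (Suc (Suc k)) - b) - ((c (Suc k))\<^sup>2 - c (Suc k)) *\<^sub>R (A *v x (Suc k) - b)"
      unfolding hat_def
      by (simp add: matrix_vector_right_distrib matrix_vector_mult_diff_distrib matrix_vector_mult_scaleR
          algebra_simps power2_eq_square)
    then have "(c (Suc k))\<^sup>2 *\<^sub>R (A *v x (Suc (Suc k)) - b)
        = ((c (Suc k))\<^sup>2 - c (Suc k)) *\<^sub>R (A *v x (Suc k) - b) + (G (Suc k) - G k)"
      unfolding G_def c_scaleR_hat_residual[symmetric] by simp
    then have "Y (Suc k) = ((c (Suc k))\<^sup>2 - c (Suc k)) *\<^sub>R (A *v x (Suc k) - b) - G k"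
      unfolding Y_def by simp
    also have "\<dots> = (1 - \<theta> k) *\<^sub>R ((c k)\<^sup>2 *\<^sub>R (A *v x (Suc k) - b)) - G k"
      unfolding \<theta>_def using c_pos[of k] by simp
    also have "\<dots> = (1 - \<theta> k) *\<^sub>R Y k + \<theta> k *\<^sub>R (- G k)"
      unfolding Y_def by (simp add: algebra_simps)
    finally show ?thesis .
  qed
  then have "Bseq Y"
    by (rule Bseq_convex_recursion[OF \<theta>]) (simp add: Bseq_minus_iff \<open>Bseq G\<close>)
  from Bseq_plus[OF this \<open>Bseq G\<close>] show ?thesis
    unfolding Y_def by simp
qed

lemma c_sq_at_top: "filterlim (\<lambda>k. (c k)\<^sup>2) at_top sequentially"
  by (rule filterlim_pow_at_top[OF _ c_at_top]) simp

lemma residual_tendsto_0: "(\<lambda>k. A *v x k - b) \<longlonglongrightarrow> 0"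
  by (rule LIMSEQ_imp_Suc, rule tendsto_0_if_Bseq_scaleR_at_top[OF Bseq_scaled_residual c_sq_at_top])

lemma gap_tendsto_0: "(\<lambda>k. gap (x k)) \<longlonglongrightarrow> 0"
proof (rule LIMSEQ_imp_Suc, rule tendsto_0_if_Bseq_scaleR_at_top[OF _ c_sq_at_top])
  show "Bseq (\<lambda>k. (c k)\<^sup>2 *\<^sub>R gap (x (Suc k)))"
    by (rule BseqI'[where K = "energy 0"]) (use energy_terms_le(1) gap_nonneg in simp)
qed

lemma f_tendsto: "(\<lambda>k. f (x k)) \<longlonglongrightarrow> f xh"
proof -
  have "(\<lambda>k. gap (x k) - \<beta> / 2 * (norm (A *v x k - b))\<^sup>2 - inner lh (A *v x k - b) + f xh)
      \<longlonglongrightarrow> 0 - \<beta> / 2 * (norm (0 :: real^'m))\<^sup>2 - inner lh 0 + f xh"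
    by (intro tendsto_intros gap_tendsto_0 residual_tendsto_0)
  then show ?thesis
    unfolding gap_def aug_lagr_def by simp
qed

lemma step_tendsto_0: "(\<lambda>k. x (Suc k) - x_bar k) \<longlonglongrightarrow> 0"
proof (rule LIMSEQ_imp_Suc, rule tendsto_0_if_Bseq_scaleR_at_top)
  have "Bseq (\<lambda>k. hat x (Suc k) - hat x k + \<epsilon> *\<^sub>R (x (Suc k) - x k))"
    using Bseq_hat_x Bseq_x Bseq_Suc_iff[of "hat x"] Bseq_Suc_iff[of x]
    by (intro Bseq_plus Bseq_minus Bseq_scaleR) simp_all
  then show "Bseq (\<lambda>k. c (Suc k) *\<^sub>R (x (Suc (Suc k)) - x_bar (Suc k)))"
    by (simp add: c_scaleR_Suc_minus_bar)
  show "filterlim (\<lambda>k. c (Suc k)) at_top sequentially"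
    using c_at_top filterlim_sequentially_Suc by blast
qed

lemma hat_lam_eventually_ge:
  assumes "0 < e"
  shows "\<forall>\<^sub>F k in sequentially. - e \<le> aug_lagr z (hat lam k) - f xh"
proof -
  define err where "err k = inner (hat lam k - lh) (A *v x (Suc k) - b)
      - inner (z - x (Suc k)) (x (Suc k) - x_bar k) / \<gamma> - Lp / 2 * (norm (x (Suc k) - x_bar k))\<^sup>2" for k
  have "err \<longlonglongrightarrow> 0 - 0 / \<gamma> - Lp / 2 * (norm (0 :: real^'n))\<^sup>2"
    unfolding err_def
    using Bseq_minus[OF Bseq_hat_lam, of "\<lambda>_. lh"] Bseq_minus[of "\<lambda>_. z" "\<lambda>k. x (Suc k)"] Bseq_x
      LIMSEQ_Suc[OF residual_tendsto_0] step_tendsto_0 gamma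
    by (intro tendsto_intros inner_tendsto_0_if_Bseq) (simp_all add: Bseq_Suc_iff[of x])
  then have err_gt: "\<forall>\<^sub>F k in sequentially. - e < err k"
    using assms by (intro order_tendstoD(1)) auto
  have err_le: "err k \<le> aug_lagr z (hat lam k) - f xh" if "1 \<le> k" for k
  proof -
    have "aug_lagr z (hat lam k) - f xh = gap z + inner (hat lam k - lh) (A *v z - b)"
      unfolding gap_def aug_lagr_def by (simp add: inner_diff_left)
    moreover have "inner (hat lam k - lh) (A *v (z - x (Suc k)))
        = inner (hat lam k - lh) (A *v z - b) - inner (hat lam k - lh) (A *v x (Suc k) - b)"
      by (simp add: matrix_vector_mult_diff_distrib inner_diff_right)
    moreover have "inner (x (Suc k) - x_bar k) (z - x (Suc k)) / \<gamma>
        = inner (z - x (Suc k)) (x (Suc k) - x_bar k) / \<gamma>"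
      by (simp add: inner_commute)
    ultimately show ?thesis
      using gap_step_ineq[OF that, of z] gap_nonneg[of "x (Suc k)"] unfolding err_def by linarith
  qed
  from err_gt eventually_ge_at_top[of 1] show ?thesis
    by eventually_elim (use err_le in force)
qed

lemma lam_eventually_ge:
  assumes "0 < e"
  shows "\<forall>\<^sub>F k in sequentially. - e \<le> aug_lagr z (lam k) - f xh"
proof (rule averaging_eventually_ge[OF c_ge1 c_growth c_at_top _ hat_lam_eventually_ge assms])
  fix k
  have "lam (Suc k) = (1 - 1 / c k) *\<^sub>R lam k + (1 / c k) *\<^sub>R hat lam k"
    by (rule Suc_eq_convex_comb_hat)
  then show "aug_lagr z (lam (Suc k)) - f xh
      = (1 - 1 / c k) * (aug_lagr z (lam k) - f xh) + 1 / c k * (aug_lagr z (hat lam k) - f xh)"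
    unfolding aug_lagr_def using c_pos[of k] by (simp add: inner_add_left field_simps)
qed

lemma cluster_point_in_KKT_set:
  assumes r: "strict_mono r" and lim: "(\<lambda>k. (x (r k), lam (r k))) \<longlonglongrightarrow> (xs, ls)"
  shows "(xs, ls) \<in> KKT_set A b df"
proof (rule KKT_if_minimizes_augmented_Lagrangian[OF f_grad])
  have x_lim: "(\<lambda>k. x (r k)) \<longlonglongrightarrow> xs" and lam_lim: "(\<lambda>k. lam (r k)) \<longlonglongrightarrow> ls"
    using tendsto_fst[OF lim] tendsto_snd[OF lim] by simp_all
  have along_r: "(\<lambda>k. u (r k)) \<longlonglongrightarrow> l" if "u \<longlonglongrightarrow> l" for u :: "nat \<Rightarrow> 'b::topological_space" and l
    using LIMSEQ_subseq_LIMSEQ[OF that r] by (simp add: o_def)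
  have "(\<lambda>k. A *v x (r k) - b) \<longlonglongrightarrow> A *v xs - b"
    by (intro tendsto_intros bounded_linear.tendsto[OF matrix_vector_mul_bounded_linear] x_lim)
  moreover have "(\<lambda>k. A *v x (r k) - b) \<longlonglongrightarrow> 0"
    by (rule along_r[OF residual_tendsto_0])
  ultimately show feasible: "A *v xs = b"
    using LIMSEQ_unique by fastforce
  have "isCont f xs"
    using has_derivative_continuous[OF f_grad] by simp
  then have "f xs = f xh"
    using LIMSEQ_unique[OF isCont_tendsto_compose[OF _ x_lim] along_r[OF f_tendsto]] by simp
  show "f xs \<le> f z + \<beta> / 2 * (norm (A *v z - b))\<^sup>2 + inner ls (A *v z - b)" for z
    unfolding aug_lagr_def[symmetric]
  proof (rule field_le_epsilon)
    fix e :: real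
    assume "0 < e"
    have "(\<lambda>k. aug_lagr z (lam (r k)) - f xh) \<longlonglongrightarrow> aug_lagr z ls - f xh"
      unfolding aug_lagr_def by (intro tendsto_intros lam_lim)
    moreover have "\<forall>\<^sub>F k in sequentially. - e \<le> aug_lagr z (lam (r k)) - f xh"
      by (rule eventually_compose_filterlim[OF lam_eventually_ge[OF \<open>0 < e\<close>] filterlim_subseq[OF r]])
    ultimately have "- e \<le> aug_lagr z ls - f xh"
      by (rule tendsto_lowerbound) simp
    then show "f xs \<le> aug_lagr z ls + e"
      using \<open>f xs = f xh\<close> by simp
  qed
qed

end

theorem lemma4p1:
  fixes f :: "real^'n \<Rightarrow> real" and df :: "real^'n \<Rightarrow> real^'n"
    and A :: "real^'n^'m" and b :: "real^'m"
    and t :: "nat \<Rightarrow> real" and \<rho> \<eta> \<gamma> \<delta> \<beta> :: real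
    and x :: "nat \<Rightarrow> real^'n" and lam :: "nat \<Rightarrow> real^'m"
  assumes f_convex: "convex_on UNIV f"
    and f_grad: "\<And>z. (f has_derivative (\<lambda>h. inner (df z) h)) (at z)"
    and df_cont: "continuous_on UNIV df"
    and KKT_nonempty: "KKT_set A b df \<noteq> {}"
    and t_mono: "\<And>k. k \<ge> 1 \<Longrightarrow> t k \<le> t (Suc k)"
    and t_1: "t 1 = 1"
    and t_gt1: "\<And>k. k > 2 \<Longrightarrow> t k > 1"
    and t_inf: "filterlim t at_top sequentially"
    and t_growth: "\<And>k. k \<ge> 1 \<Longrightarrow> (t (Suc k))\<^sup>2 - (t k)\<^sup>2 \<le> \<rho> * t (Suc k)"
    and rho: "0 < \<rho>" "\<rho> \<le> 1"
    and eta: "\<rho> \<le> \<eta>" "\<eta> \<le> 1"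
    and gamma: "\<gamma> > 0" and delta: "\<delta> > 0" and beta: "\<beta> \<ge> 0"
    and init: "x 0 = x 1" "lam 0 = lam 1"
    and x_update:
      "(\<forall>k\<ge>1. \<forall>y. aalm_obj f A b \<beta> \<gamma> \<delta> (aalm_bar t x k)
              (aalm_c t \<eta> k *\<^sub>R aalm_bar t lam k - aalm_alpha t \<eta> k *\<^sub>R lam k)
              (aalm_c t \<eta> k) (aalm_alpha t \<eta> k *\<^sub>R (A *v x k) + b) (x (Suc k))
            \<le> aalm_obj f A b \<beta> \<gamma> \<delta> (aalm_bar t x k)
              (aalm_c t \<eta> k *\<^sub>R aalm_bar t lam k - aalm_alpha t \<eta> k *\<^sub>R lam k)
              (aalm_c t \<eta> k) (aalm_alpha t \<eta> k *\<^sub>R (A *v x k) + b) y)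
       \<or> ((\<exists>L>0. (\<forall>u v. norm (df u - df v) \<le> L * norm (u - v)) \<and> \<gamma> \<le> 1 / L)
          \<and> (\<forall>k\<ge>1. \<forall>y.
              aalm_obj (\<lambda>z. inner (df (aalm_bar t x k)) z) A b \<beta> \<gamma> \<delta> (aalm_bar t x k)
                (aalm_c t \<eta> k *\<^sub>R aalm_bar t lam k - aalm_alpha t \<eta> k *\<^sub>R lam k)
                (aalm_c t \<eta> k) (aalm_alpha t \<eta> k *\<^sub>R (A *v x k) + b) (x (Suc k))
              \<le> aalm_obj (\<lambda>z. inner (df (aalm_bar t x k)) z) A b \<beta> \<gamma> \<delta> (aalm_bar t x k)
                (aalm_c t \<eta> k *\<^sub>R aalm_bar t lam k - aalm_alpha t \<eta> k *\<^sub>R lam k)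
                (aalm_c t \<eta> k) (aalm_alpha t \<eta> k *\<^sub>R (A *v x k) + b) y))"
    and lam_update: "\<And>k. k \<ge> 1 \<Longrightarrow>
      lam (Suc k) = aalm_bar t lam k
        + \<delta> *\<^sub>R (aalm_c t \<eta> k *\<^sub>R (A *v x (Suc k)) - (aalm_alpha t \<eta> k *\<^sub>R (A *v x k) + b))"
  shows "\<forall>xs ls. (\<exists>r. strict_mono r \<and> ((\<lambda>k. (x (r k), lam (r k))) \<longlonglongrightarrow> (xs, ls)))
            \<longrightarrow> (xs, ls) \<in> KKT_set A b df"
proof (intro allI impI)
  fix xs ls
  assume "\<exists>r. strict_mono r \<and> ((\<lambda>k. (x (r k), lam (r k))) \<longlonglongrightarrow> (xs, ls))"
  then obtain r where r: "strict_mono r" and lim: "(\<lambda>k. (x (r k), lam (r k))) \<longlonglongrightarrow> (xs, ls)"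
    by blast
  obtain xh lh where KKT_point: "(xh, lh) \<in> KKT_set A b df"
    using KKT_nonempty by auto
  obtain Lp where Lp: "0 \<le> Lp" "Lp * \<gamma> \<le> 1"
    and step: "\<forall>k\<ge>1. aalm_inexact_step f A b \<beta> \<gamma> \<delta> Lp (aalm_bar t x k)
      (aalm_c t \<eta> k *\<^sub>R aalm_bar t lam k - aalm_alpha t \<eta> k *\<^sub>R lam k) (aalm_c t \<eta> k)
      (aalm_alpha t \<eta> k *\<^sub>R (A *v x k) + b) (x (Suc k))"
    using aalm_inexact_step_cases[OF f_convex f_grad x_update] by blast
  have t_ge1: "1 \<le> t k" if "1 \<le> k" for k
    using that by (induction k rule: dec_induct) (use t_1 t_mono in \<open>auto intro: order_trans\<close>)
  have t_growth_eta: "(t (Suc k))\<^sup>2 - (t k)\<^sup>2 \<le> \<eta> * t (Suc k)" if "1 \<le> k" for k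
    using t_growth[OF that] mult_right_mono[OF eta(1), of "t (Suc k)"] t_ge1[of "Suc k"] by linarith
  interpret aalm_iterates f df A b t \<eta> \<gamma> \<delta> \<beta> Lp x lam xh lh
    using f_convex f_grad KKT_point t_ge1 t_growth_eta t_inf rho eta gamma delta beta Lp step lam_update
    by unfold_locales auto
  show "(xs, ls) \<in> KKT_set A b df"
    by (rule cluster_point_in_KKT_set[OF r lim])
qed

end
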